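(* The log-exp-supremum is transitive: for all finite non-empty multi-sets $\mathcal X$ and $\mathcal Y$ of real symmetric $2\times2$ matrices, $$\mathrm{Sup}_{\mathrm{LE}}(\mathcal X\cup\mathcal Y)=\mathrm{Sup}_{\mathrm{LE}}\big(\{\mathrm{Sup}_{\mathrm{LE}}(\mathcal X),\mathrm{Sup}_{\mathrm{LE}}(\mathcal Y)\}\big),$$ where $\cup$ denotes multi-set union.
   Context: For a finite multi-set $\mathcal X=\{X_1,\dots,X_n\}$ of real symmetric $2\times2$ matrices, the log-exp-supremum is $\mathrm{Sup}_{\mathrm{LE}}(\mathcal X):=\lim_{m\to\infty}\frac1m\log\sum_{i=1}^n\exp(mX_i)$, with $\exp,\log$ the matrix exponential and logarithm. *)

theory Defs
  imports "HOL-Analysis.Analysis" "HOL-Library.Multiset"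
begin

fun mpow :: "real^'n^'n \<Rightarrow> nat \<Rightarrow> real^'n^'n" where
  "mpow A 0 = mat 1"
| "mpow A (Suc k) = A ** mpow A k"

definition mexp :: "real^'n^'n \<Rightarrow> real^'n^'n" where
  "mexp A = (\<Sum>k. (1 / fact k) *\<^sub>R mpow A k)"

definition mlog :: "real^'n^'n \<Rightarrow> real^'n^'n" where
  "mlog A = (THE L. transpose L = L \<and> mexp L = A)"

definition SupLE :: "(real^'n^'n) multiset \<Rightarrow> real^'n^'n" where
  "SupLE X = Lim at_top
     (\<lambda>m::real. (1 / m) *\<^sub>R mlog (\<Sum>\<^sub># (image_mset (\<lambda>Xi. mexp (m *\<^sub>R Xi)) X)))"

end

theory Submission
  imports Defs
begin

text \<open>
  The sum of the \<open>exp (m X\<^sub>i)\<close> is a sum of rank-one terms \<open>c exp (m \<lambda>) v v\<^sup>T\<close>, one for each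
  eigenpair \<open>(\<lambda>, v)\<close> of each \<open>X\<^sub>i\<close>. Its trace grows like \<open>exp (m M)\<close>, where \<open>M\<close> is the largest
  exponent, and by the Lagrange identity its determinant grows like \<open>exp (m K)\<close>, where \<open>K\<close> is
  the largest sum of two exponents belonging to non-parallel directions. So the eigenvalues grow
  like \<open>exp (m M)\<close> and \<open>exp (m (K - M))\<close>, and if \<open>K - M < M\<close> the top eigenline converges to the
  common direction of the top terms. Hence the log-exp-supremum is the symmetric matrix with
  eigenvalues \<open>M\<close> and \<open>K - M\<close> whose top eigenvector is that direction.

  Transitivity is then combinatorial. For a direction \<open>w\<close>, the largest exponent among the terms
  not parallel to \<open>w\<close> is \<open>M\<close> or \<open>K - M\<close> according as \<open>w\<close> is transversal or parallel to the top
  direction, so it is the same for a family and for the two eigen-terms of its log-exp-supremum.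
  Since \<open>K\<close> equals \<open>M\<close> plus this quantity at the top direction, the exponents and the top
  direction of a union depend only on these data.
\<close>

section \<open>Symmetric two-by-two matrices and plane vectors\<close>

definition sym2 :: "real \<Rightarrow> real \<Rightarrow> real \<Rightarrow> real^2^2" where
  "sym2 a b c = (\<chi> i j. if i = 1 then (if j = 1 then a else b) else (if j = 1 then b else c))"

lemma sym2_nth [simp]:
  "sym2 a b c $1$1 = a" "sym2 a b c $1$2 = b" "sym2 a b c $2$1 = b" "sym2 a b c $2$2 = c"
  by (simp_all add: sym2_def)

lemma matrix2_eq_iff:
  "(A::real^2^2) = B \<longleftrightarrow> A$1$1 = B$1$1 \<and> A$1$2 = B$1$2 \<and> A$2$1 = B$2$1 \<and> A$2$2 = B$2$2"
  unfolding vec_eq_iff forall_2 by blast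

lemma vector2_eq_iff: "(v::real^2) = w \<longleftrightarrow> v$1 = w$1 \<and> v$2 = w$2"
  unfolding vec_eq_iff forall_2 by blast

lemma symmetric_eq_sym2:
  assumes "transpose (A::real^2^2) = A"
  shows "A = sym2 (A$1$1) (A$1$2) (A$2$2)"
proof -
  have "A$2$1 = A$1$2" using arg_cong[OF assms, of "\<lambda>M. M$1$2"] by (simp add: transpose_def)
  thus ?thesis by (simp add: matrix2_eq_iff)
qed

lemma mat_1_eq_sym2: "mat 1 = sym2 1 0 1"
  by (simp add: matrix2_eq_iff mat_def)

lemma sym2_add: "sym2 a b c + sym2 a' b' c' = sym2 (a + a') (b + b') (c + c')"
  by (simp add: matrix2_eq_iff)

lemma scaleR_sym2: "r *\<^sub>R sym2 a b c = sym2 (r * a) (r * b) (r * c)"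
  by (simp add: matrix2_eq_iff)

lemma transpose_sym2: "transpose (sym2 a b c) = sym2 a b c"
  by (simp add: matrix2_eq_iff transpose_def)

lemma trace_sym2: "trace (sym2 a b c) = a + c"
  by (simp add: trace_def sum_2)

lemma det_sym2: "det (sym2 a b c) = a * c - b^2"
  by (simp add: det_2 power2_eq_square)

lemma norm_sym2: "norm (sym2 a b c) = sqrt (a^2 + 2 * b^2 + c^2)"
  by (simp add: sym2_def norm_vec_def L2_set_def sum_2)

lemma sym2_mult: "sym2 a b c ** sym2 a' b' c' =
  (\<chi> i j. if i = 1 then (if j = 1 then a*a' + b*b' else a*b' + b*c')
          else (if j = 1 then b*a' + c*b' else b*b' + c*c'))"
  by (simp add: matrix2_eq_iff matrix_matrix_mult_def sum_2)

definition sqnorm :: "real^2 \<Rightarrow> real" where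
  "sqnorm v = (v$1)^2 + (v$2)^2"

definition perp :: "real^2 \<Rightarrow> real^2" where
  "perp v = vector [-(v$2), v$1]"

definition cross2 :: "real^2 \<Rightarrow> real^2 \<Rightarrow> real" where
  "cross2 v w = v$1 * w$2 - v$2 * w$1"

definition outer :: "real^2 \<Rightarrow> real^2^2" where
  "outer v = sym2 ((v$1)^2) (v$1 * v$2) ((v$2)^2)"

definition proj :: "real^2 \<Rightarrow> real^2^2" where
  "proj u = (1 / sqnorm u) *\<^sub>R outer u"

lemma perp_nth [simp]: "perp v $1 = -(v$2)" "perp v $2 = v$1"
  by (simp_all add: perp_def)

lemma sqnorm_perp [simp]: "sqnorm (perp v) = sqnorm v"
  by (simp add: sqnorm_def)

lemma sqnorm_pos: "v \<noteq> 0 \<Longrightarrow> sqnorm v > 0"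
  by (cases "v$1 = 0") (auto simp: sqnorm_def vector2_eq_iff add_pos_nonneg add_nonneg_pos)

lemma perp_nonzero: "v \<noteq> 0 \<Longrightarrow> perp v \<noteq> 0"
  by (auto simp: vector2_eq_iff)

lemma cross2_perp: "cross2 v (perp v) = sqnorm v"
  by (simp add: cross2_def sqnorm_def power2_eq_square)

lemma cross2_commute: "cross2 v w = - cross2 w v"
  by (simp add: cross2_def)

lemma trace_outer: "trace (outer v) = sqnorm v"
  by (simp add: outer_def trace_sym2 sqnorm_def)

lemma proj_eq_sym2: "proj u = sym2 ((u$1)^2 / sqnorm u) (u$1 * u$2 / sqnorm u) ((u$2)^2 / sqnorm u)"
  by (simp add: proj_def outer_def scaleR_sym2)

lemma proj_add_proj_perp:
  assumes "u \<noteq> 0"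
  shows "proj u + proj (perp u) = mat 1"
proof -
  have "(u$1)^2 / sqnorm u + (u$2)^2 / sqnorm u = 1"
    using sqnorm_pos[OF assms] by (simp add: add_divide_distrib[symmetric] sqnorm_def[symmetric])
  thus ?thesis unfolding proj_eq_sym2 sym2_add mat_1_eq_sym2 sqnorm_perp
    by (simp add: add_ac diff_divide_distrib[symmetric])
qed

lemma proj_idem:
  assumes "u \<noteq> 0"
  shows "proj u ** proj u = proj u"
proof -
  have "(u$1)^2 + (u$2)^2 > 0" using sqnorm_pos[OF assms] by (simp add: sqnorm_def)
  thus ?thesis unfolding proj_eq_sym2 sym2_mult sqnorm_def
    by (simp add: matrix2_eq_iff divide_simps) (simp add: power2_eq_square algebra_simps eval_nat_numeral)
qed

lemma proj_perp_orth:
  assumes "u \<noteq> 0"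
  shows "proj u ** proj (perp u) = 0" "proj (perp u) ** proj u = 0"
proof -
  have n: "(u$1)^2 + (u$2)^2 > 0" using sqnorm_pos[OF assms] by (simp add: sqnorm_def)
  show "proj u ** proj (perp u) = 0" "proj (perp u) ** proj u = 0"
    using n unfolding proj_eq_sym2 sym2_mult sqnorm_perp sqnorm_def
    by (simp_all add: matrix2_eq_iff divide_simps) (simp_all add: power2_eq_square algebra_simps eval_nat_numeral)
qed

lemma norm_proj: "u \<noteq> 0 \<Longrightarrow> norm (proj u) = 1"
proof -
  assume "u \<noteq> 0"
  hence n: "sqnorm u > 0" by (rule sqnorm_pos)
  have "((u$1)^2 / sqnorm u)^2 + 2 * (u$1 * u$2 / sqnorm u)^2 + ((u$2)^2 / sqnorm u)^2
      = (sqnorm u / sqnorm u)^2"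
    by (simp add: sqnorm_def power_divide add_divide_distrib[symmetric]) algebra
  thus ?thesis using n by (simp add: proj_eq_sym2 norm_sym2)
qed

lemma spectral_eq_shifted_proj: "u \<noteq> 0 \<Longrightarrow> x *\<^sub>R proj u + y *\<^sub>R proj (perp u) = y *\<^sub>R mat 1 + (x - y) *\<^sub>R proj u"
  using proj_add_proj_perp[of u] by (auto simp: algebra_simps simp flip: scaleR_add_right)

lemma cross2_trans: "cross2 a b = 0 \<Longrightarrow> cross2 b c = 0 \<Longrightarrow> b \<noteq> 0 \<Longrightarrow> cross2 a c = 0"
proof -
  assume ab: "cross2 a b = 0" and bc: "cross2 b c = 0" and b: "b \<noteq> 0"
  have "b$1 * cross2 a c = c$1 * cross2 a b + a$1 * cross2 b c"
    and "b$2 * cross2 a c = c$2 * cross2 a b + a$2 * cross2 b c"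
    by (simp_all add: cross2_def algebra_simps)
  thus ?thesis using ab bc b by (auto simp: vector2_eq_iff)
qed

lemma cross2_perp_nonzero:
  assumes "u \<noteq> 0" "w \<noteq> 0" "cross2 w u = 0"
  shows "cross2 w (perp u) \<noteq> 0"
proof
  assume h: "cross2 w (perp u) = 0"
  have "w$1 * sqnorm u = u$1 * cross2 w (perp u) + u$2 * cross2 w u"
    and "w$2 * sqnorm u = u$2 * cross2 w (perp u) - u$1 * cross2 w u"
    by (simp_all add: cross2_def sqnorm_def power2_eq_square algebra_simps)
  hence "w$1 * sqnorm u = 0" "w$2 * sqnorm u = 0" using h assms(3) by simp_all
  hence "w = 0" using sqnorm_pos[OF assms(1)] by (simp add: vector2_eq_iff)
  thus False using assms(2) by simp
qed

lemma outer_parallel: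
  assumes "u \<noteq> 0" "cross2 v u = 0"
  shows "outer v = (sqnorm v / sqnorm u) *\<^sub>R outer u"
proof -
  define \<mu> where "\<mu> = (v$1 * u$1 + v$2 * u$2) / sqnorm u"
  have n: "sqnorm u \<noteq> 0" using sqnorm_pos[OF assms(1)] by simp
  have "v$1 * sqnorm u = (v$1 * u$1 + v$2 * u$2) * u$1 + u$2 * cross2 v u"
    and "v$2 * sqnorm u = (v$1 * u$1 + v$2 * u$2) * u$2 - u$1 * cross2 v u"
    by (simp_all add: cross2_def sqnorm_def power2_eq_square algebra_simps)
  hence "v = \<mu> *\<^sub>R u"
    using assms(2) n by (simp add: vector2_eq_iff \<mu>_def field_simps)
  moreover have "outer (\<mu> *\<^sub>R u) = \<mu>^2 *\<^sub>R outer u" "sqnorm (\<mu> *\<^sub>R u) = \<mu>^2 * sqnorm u"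
    by (simp_all add: outer_def sqnorm_def scaleR_sym2 power_mult_distrib algebra_simps power2_eq_square)
  ultimately show ?thesis using n by simp
qed

lemma proj_parallel: "u \<noteq> 0 \<Longrightarrow> w \<noteq> 0 \<Longrightarrow> cross2 u w = 0 \<Longrightarrow> proj u = proj w"
  using sqnorm_pos[of u] by (simp add: proj_def outer_parallel)

lemma matrix_add_rdistrib: "((A::real^'n^'m) + B) ** C = A ** C + B ** C"
  by (vector matrix_matrix_mult_def sum.distrib[symmetric] field_simps)

lemma trace_scaleR: "trace (c *\<^sub>R A) = c * trace A"
  by (simp add: trace_def sum_distrib_left)

lemma sum_outer:
  "(\<Sum>i\<in>I. c i *\<^sub>R outer (v i)) =
     sym2 (\<Sum>i\<in>I. c i * (v i$1)^2) (\<Sum>i\<in>I. c i * (v i$1 * v i$2)) (\<Sum>i\<in>I. c i * (v i$2)^2)"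
  by (simp add: outer_def scaleR_sym2 matrix2_eq_iff)

lemma trace_sum_outer: "trace (\<Sum>i\<in>I. c i *\<^sub>R outer (v i)) = (\<Sum>i\<in>I. c i * sqnorm (v i))"
  unfolding sum_outer trace_sym2 by (simp add: sqnorm_def sum.distrib[symmetric] distrib_left)

lemma det_sum_outer:
  "det (\<Sum>i\<in>I. c i *\<^sub>R outer (v i)) = (\<Sum>i\<in>I. \<Sum>j\<in>I. c i * c j * (cross2 (v i) (v j))^2) / 2"
proof -
  let ?x = "\<lambda>i. v i$1" and ?y = "\<lambda>i. v i$2"
  have xx_yy: "(\<Sum>i\<in>I. c i * (?x i)^2) * (\<Sum>i\<in>I. c i * (?y i)^2) =
      (\<Sum>i\<in>I. \<Sum>j\<in>I. c i * c j * ((?x i)^2 * (?y j)^2))"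
    and yy_xx: "(\<Sum>i\<in>I. c i * (?x i)^2) * (\<Sum>i\<in>I. c i * (?y i)^2) =
      (\<Sum>i\<in>I. \<Sum>j\<in>I. c i * c j * ((?y i)^2 * (?x j)^2))"
    unfolding sum_product by (simp add: mult_ac) (subst sum.swap, simp add: mult_ac)
  have xy: "(\<Sum>i\<in>I. c i * (?x i * ?y i))^2 = (\<Sum>i\<in>I. \<Sum>j\<in>I. c i * c j * (?x i * ?y i * ?x j * ?y j))"
    unfolding power2_eq_square sum_product by (simp add: mult_ac)
  have "(\<Sum>i\<in>I. \<Sum>j\<in>I. c i * c j * (cross2 (v i) (v j))^2) =
      (\<Sum>i\<in>I. \<Sum>j\<in>I. c i * c j * ((?x i)^2 * (?y j)^2) + c i * c j * ((?y i)^2 * (?x j)^2)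
        - 2 * (c i * c j * (?x i * ?y i * ?x j * ?y j)))"
    by (intro sum.cong refl) (simp add: cross2_def power2_eq_square algebra_simps)
  also have "\<dots> = 2 * ((\<Sum>i\<in>I. c i * (?x i)^2) * (\<Sum>i\<in>I. c i * (?y i)^2) - (\<Sum>i\<in>I. c i * (?x i * ?y i))^2)"
    unfolding sum.distrib sum_subtractf sum_distrib_left[symmetric] xx_yy[symmetric] yy_xx[symmetric] xy
    by simp
  finally show ?thesis unfolding sum_outer det_sym2 by simp
qed

section \<open>Spectral calculus\<close>

lemma mpow_orthogonal_idempotents:
  assumes "P ** P = P" "Q ** Q = Q" "P ** Q = 0" "Q ** P = 0" "P + Q = mat 1"
  shows "mpow (x *\<^sub>R P + y *\<^sub>R Q) k = x^k *\<^sub>R P + y^k *\<^sub>R Q"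
proof (induction k)
  case 0
  show ?case using assms(5) by simp
next
  case (Suc k)
  have "mpow (x *\<^sub>R P + y *\<^sub>R Q) (Suc k) = (x *\<^sub>R P + y *\<^sub>R Q) ** (x^k *\<^sub>R P + y^k *\<^sub>R Q)"
    using Suc by simp
  also have "\<dots> = x^(Suc k) *\<^sub>R P + y^(Suc k) *\<^sub>R Q"
    by (simp add: matrix_add_ldistrib matrix_add_rdistrib matrix_scalar_ac
        scalar_matrix_assoc[symmetric] assms(1-4) mult.commute)
  finally show ?case .
qed

lemma mexp_orthogonal_idempotents:
  assumes "P ** P = P" "Q ** Q = Q" "P ** Q = 0" "Q ** P = 0" "P + Q = mat 1"
  shows "mexp (x *\<^sub>R P + y *\<^sub>R Q) = exp x *\<^sub>R P + exp y *\<^sub>R Q"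
proof -
  have "(\<lambda>k. (1 / fact k) *\<^sub>R mpow (x *\<^sub>R P + y *\<^sub>R Q) k) =
        (\<lambda>k. (x^k /\<^sub>R fact k) *\<^sub>R P + (y^k /\<^sub>R fact k) *\<^sub>R Q)"
    by (simp add: mpow_orthogonal_idempotents[OF assms] scaleR_add_right divide_inverse_commute)
  moreover have "(\<lambda>k. (x^k /\<^sub>R fact k) *\<^sub>R P + (y^k /\<^sub>R fact k) *\<^sub>R Q) sums (exp x *\<^sub>R P + exp y *\<^sub>R Q)"
    by (intro sums_add sums_scaleR_left exp_converges)
  ultimately show ?thesis
    unfolding mexp_def by (simp add: sums_unique[symmetric])
qed

lemma mexp_spectral:
  "u \<noteq> 0 \<Longrightarrow> mexp (x *\<^sub>R proj u + y *\<^sub>R proj (perp u)) = exp x *\<^sub>R proj u + exp y *\<^sub>R proj (perp u)"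
  by (intro mexp_orthogonal_idempotents proj_idem perp_nonzero proj_perp_orth proj_add_proj_perp)

definition eig_gap :: "real^2^2 \<Rightarrow> real" where
  "eig_gap A = sqrt ((A$1$1 - A$2$2)^2 + 4 * (A$1$2)^2)"

definition eig_max :: "real^2^2 \<Rightarrow> real" where
  "eig_max A = (A$1$1 + A$2$2 + eig_gap A) / 2"

definition eig_min :: "real^2^2 \<Rightarrow> real" where
  "eig_min A = (A$1$1 + A$2$2 - eig_gap A) / 2"

lemma eig_min_le_max: "eig_min A \<le> eig_max A"
  by (simp add: eig_max_def eig_min_def eig_gap_def)

lemma eig_max_add_eig_min: "eig_max A + eig_min A = trace A"
  by (simp add: eig_max_def eig_min_def trace_def sum_2 field_simps)

lemma half_trace_le_eig_max: "trace A / 2 \<le> eig_max A"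
  by (simp add: eig_max_def eig_gap_def trace_def sum_2)

lemma eig_max_mult_eig_min: "transpose A = A \<Longrightarrow> eig_max A * eig_min A = det A"
proof -
  assume "transpose A = A"
  hence "A = sym2 (A$1$1) (A$1$2) (A$2$2)" by (rule symmetric_eq_sym2)
  moreover have "(sqrt ((A$1$1 - A$2$2)^2 + 4 * (A$1$2)^2))^2 = (A$1$1 - A$2$2)^2 + 4 * (A$1$2)^2"
    by simp
  ultimately show ?thesis unfolding eig_max_def eig_min_def eig_gap_def
    by (subst (5) \<open>A = _\<close>, unfold det_sym2) (simp add: power2_eq_square field_simps)
qed

lemma eig_min_pos:
  assumes "transpose A = A" "trace A > 0" "det A > 0"
  shows "eig_min A > 0"
proof -
  have "eig_max A > 0" using half_trace_le_eig_max[of A] assms(2) by linarith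
  thus ?thesis using eig_max_mult_eig_min[OF assms(1)] assms(3) by (metis zero_less_mult_pos)
qed

lemma sym2_spectral_offdiag:
  fixes a b c :: real
  assumes "b \<noteq> 0"
  defines "l1 \<equiv> (a + c + sqrt ((a - c)^2 + 4 * b^2)) / 2"
    and "l2 \<equiv> (a + c - sqrt ((a - c)^2 + 4 * b^2)) / 2"
  shows "sym2 a b c = l1 *\<^sub>R proj (vector [b, l1 - a]) + l2 *\<^sub>R proj (perp (vector [b, l1 - a]))"
proof -
  define p where "p = l1 - a"
  have s2: "(sqrt ((a - c)^2 + 4 * b^2))^2 = (a - c)^2 + 4 * b^2" by simp
  \<comment> \<open>\<open>(b, p)\<close> is an eigenvector for \<open>l1\<close> because \<open>l1\<close> and \<open>l2\<close> are the roots of the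
    characteristic polynomial, i.e. \<open>p (a - l2) = b\<^sup>2\<close>.\<close>
  have pq: "p * (a - l2) = b^2" "l1 - c = a - l2" "c - l2 = p"
    using s2 by (simp_all add: p_def l1_def l2_def power2_eq_square field_simps)
  have e11: "l1 * b^2 + l2 * p^2 = a * (b^2 + p^2)"
  proof -
    have "p * b^2 = (a - l2) * p^2"
      using pq(1) by (simp add: power2_eq_square) (metis mult.assoc mult.commute)
    thus ?thesis by (simp add: p_def algebra_simps)
  qed
  have e12: "l1 * (b * p) - l2 * (p * b) = b * (b^2 + p^2)"
  proof -
    have "(l1 - l2) * p = b^2 + p^2"
      using pq(1) by (simp add: p_def power2_eq_square algebra_simps)
    thus ?thesis by (simp add: algebra_simps power2_eq_square)
  qed
  have e22: "l1 * p^2 + l2 * b^2 = c * (b^2 + p^2)"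
  proof -
    have "(l1 - c) * p^2 = (c - l2) * b^2"
      unfolding pq(2,3) using pq(1) by (simp add: power2_eq_square) (metis mult.assoc mult.commute)
    thus ?thesis by (simp add: algebra_simps)
  qed
  have N0: "b^2 + p^2 \<noteq> 0" using assms(1) by (simp add: sum_power2_eq_zero_iff)
  have "l1 * (b^2 / (b^2 + p^2)) + l2 * ((-p)^2 / (b^2 + p^2)) = a"
    using e11 N0 by (auto simp: divide_simps)
  moreover have "l1 * (b * p / (b^2 + p^2)) + l2 * ((- p) * b / (b^2 + p^2)) = b"
    using e12 N0 by (auto simp: divide_simps algebra_simps)
  moreover have "l1 * (p^2 / (b^2 + p^2)) + l2 * (b^2 / (b^2 + p^2)) = c"
    using e22 N0 by (auto simp: divide_simps)
  ultimately have "sym2 a b c = sym2 (l1 * (b^2 / (b^2 + p^2)) + l2 * ((-p)^2 / (b^2 + p^2)))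
      (l1 * (b * p / (b^2 + p^2)) + l2 * ((- p) * b / (b^2 + p^2)))
      (l1 * (p^2 / (b^2 + p^2)) + l2 * (b^2 / (b^2 + p^2)))"
    by simp
  also have "\<dots> = l1 *\<^sub>R proj (vector [b, p]) + l2 *\<^sub>R proj (perp (vector [b, p]))"
    unfolding proj_eq_sym2 sqnorm_perp scaleR_sym2 sym2_add by (simp add: sqnorm_def)
  finally show ?thesis unfolding p_def .
qed

lemma sym2_spectral_decomposition:
  "\<exists>u. u \<noteq> 0 \<and> sym2 a b c = eig_max (sym2 a b c) *\<^sub>R proj u + eig_min (sym2 a b c) *\<^sub>R proj (perp u)"
proof -
  define s where "s = sqrt ((a - c)^2 + 4 * b^2)"
  have eig: "eig_max (sym2 a b c) = (a + c + s) / 2" "eig_min (sym2 a b c) = (a + c - s) / 2"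
    by (simp_all add: eig_max_def eig_min_def eig_gap_def s_def)
  consider "b = 0" "c \<le> a" | "b = 0" "a < c" | "b \<noteq> 0" by linarith
  thus ?thesis
  proof cases
    case 1
    hence "sym2 a b c = eig_max (sym2 a b c) *\<^sub>R proj (vector [1, 0]) + eig_min (sym2 a b c) *\<^sub>R proj (perp (vector [1, 0]))"
      by (simp add: eig_max_def eig_min_def eig_gap_def proj_eq_sym2 sqnorm_def scaleR_sym2 sym2_add)
    thus ?thesis by (metis vector_2(1) zero_index zero_neq_one)
  next
    case 2
    hence "sym2 a b c = eig_max (sym2 a b c) *\<^sub>R proj (vector [0, 1]) + eig_min (sym2 a b c) *\<^sub>R proj (perp (vector [0, 1]))"
      by (simp add: eig_max_def eig_min_def eig_gap_def proj_eq_sym2 sqnorm_def scaleR_sym2 sym2_add)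
    thus ?thesis by (metis vector_2(2) zero_index zero_neq_one)
  next
    case 3
    thus ?thesis unfolding eig s_def
      by (metis sym2_spectral_offdiag vector_2(1) zero_index)
  qed
qed

lemma spectral_decomposition:
  "transpose A = A \<Longrightarrow> \<exists>u. u \<noteq> 0 \<and> A = eig_max A *\<^sub>R proj u + eig_min A *\<^sub>R proj (perp u)"
  by (metis symmetric_eq_sym2 sym2_spectral_decomposition)

lemma eig_spectral:
  assumes u: "u \<noteq> 0" and "\<beta> \<le> \<alpha>"
  shows "eig_max (\<alpha> *\<^sub>R proj u + \<beta> *\<^sub>R proj (perp u)) = \<alpha>"
    and "eig_min (\<alpha> *\<^sub>R proj u + \<beta> *\<^sub>R proj (perp u)) = \<beta>"
proof -
  define x y z where "x = (u$1)^2 / sqnorm u" and "y = (u$2)^2 / sqnorm u"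
    and "z = u$1 * u$2 / sqnorm u"
  have xy: "x + y = 1"
    using sqnorm_pos[OF u] by (simp add: x_def y_def add_divide_distrib[symmetric] sqnorm_def[symmetric])
  have z2: "z^2 = x * y" by (simp add: x_def y_def z_def power2_eq_square)
  have A: "\<alpha> *\<^sub>R proj u + \<beta> *\<^sub>R proj (perp u) = sym2 (\<alpha>*x + \<beta>*y) ((\<alpha>-\<beta>)*z) (\<alpha>*y + \<beta>*x)"
    unfolding proj_eq_sym2 scaleR_sym2 sym2_add
    by (simp add: x_def y_def z_def algebra_simps diff_divide_distrib)
  have "(\<alpha>*x + \<beta>*y - (\<alpha>*y + \<beta>*x))^2 + 4*((\<alpha>-\<beta>)*z)^2 = ((\<alpha>-\<beta>) * (x+y))^2"
    unfolding power_mult_distrib z2 by (simp add: power2_eq_square algebra_simps)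
  hence "eig_gap (\<alpha> *\<^sub>R proj u + \<beta> *\<^sub>R proj (perp u)) = \<alpha> - \<beta>"
    unfolding A eig_gap_def using xy assms(2) by simp
  moreover have "\<alpha>*x + \<beta>*y + (\<alpha>*y + \<beta>*x) = \<alpha> + \<beta>"
    using xy by (simp add: algebra_simps flip: distrib_left)
  ultimately show "eig_max (\<alpha> *\<^sub>R proj u + \<beta> *\<^sub>R proj (perp u)) = \<alpha>"
    and "eig_min (\<alpha> *\<^sub>R proj u + \<beta> *\<^sub>R proj (perp u)) = \<beta>"
    unfolding eig_max_def eig_min_def by (simp_all add: A)
qed

definition top_eigproj :: "real^2^2 \<Rightarrow> real^2^2" where
  "top_eigproj A =
     (if eig_max A = eig_min A then 0 else (1 / (eig_max A - eig_min A)) *\<^sub>R (A - eig_min A *\<^sub>R mat 1))"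

lemma top_eigproj_spectral:
  assumes "u \<noteq> 0" "\<beta> < \<alpha>"
  shows "top_eigproj (\<alpha> *\<^sub>R proj u + \<beta> *\<^sub>R proj (perp u)) = proj u"
  using assms by (simp add: top_eigproj_def eig_spectral less_imp_le) (simp add: spectral_eq_shifted_proj)

lemma norm_top_eigproj_le:
  assumes "transpose A = A"
  shows "norm (top_eigproj A) \<le> 1"
proof -
  obtain u where "u \<noteq> 0" and A: "A = eig_max A *\<^sub>R proj u + eig_min A *\<^sub>R proj (perp u)"
    using spectral_decomposition[OF assms] by blast
  thus ?thesis using eig_min_le_max[of A] top_eigproj_spectral[of u "eig_min A" "eig_max A"]
    by (cases "eig_min A = eig_max A") (auto simp: top_eigproj_def norm_proj)
qed

definition spectral_log :: "real^2^2 \<Rightarrow> real^2^2" where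
  "spectral_log A = ln (eig_min A) *\<^sub>R mat 1 + (ln (eig_max A) - ln (eig_min A)) *\<^sub>R top_eigproj A"

lemma spectral_log_spectral:
  assumes "u \<noteq> 0" "\<beta> \<le> \<alpha>"
  shows "spectral_log (\<alpha> *\<^sub>R proj u + \<beta> *\<^sub>R proj (perp u)) = ln \<alpha> *\<^sub>R proj u + ln \<beta> *\<^sub>R proj (perp u)"
proof (cases "\<alpha> = \<beta>")
  case True
  thus ?thesis unfolding True spectral_log_def eig_spectral[OF assms(1) order_refl]
    by (simp add: spectral_eq_shifted_proj[OF assms(1)])
next
  case False
  hence "top_eigproj (\<alpha> *\<^sub>R proj u + \<beta> *\<^sub>R proj (perp u)) = proj u"
    using assms by (simp add: top_eigproj_spectral)
  thus ?thesis by (simp add: spectral_log_def eig_spectral[OF assms]) (simp add: spectral_eq_shifted_proj[OF assms(1)])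
qed

lemma mlog_eq_spectral_log:
  assumes A: "transpose A = A" and pos: "eig_min A > 0"
  shows "mlog A = spectral_log A"
proof -
  obtain u where u: "u \<noteq> 0" and Au: "A = eig_max A *\<^sub>R proj u + eig_min A *\<^sub>R proj (perp u)"
    using spectral_decomposition[OF A] by blast
  have L_A: "spectral_log A = ln (eig_max A) *\<^sub>R proj u + ln (eig_min A) *\<^sub>R proj (perp u)"
    by (subst Au) (rule spectral_log_spectral[OF u eig_min_le_max])
  show ?thesis unfolding mlog_def
  proof (rule the_equality)
    have "eig_max A > 0" using pos eig_min_le_max[of A] by linarith
    hence "mexp (spectral_log A) = A"
      unfolding L_A mexp_spectral[OF u] using pos by (subst (3) Au) simp
    moreover have "transpose (spectral_log A) = spectral_log A"
      unfolding L_A proj_eq_sym2 scaleR_sym2 sym2_add transpose_sym2 ..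
    ultimately show "transpose (spectral_log A) = spectral_log A \<and> mexp (spectral_log A) = A" by simp
  next
    fix L assume L: "transpose L = L \<and> mexp L = A"
    obtain w where w: "w \<noteq> 0" and Lw: "L = eig_max L *\<^sub>R proj w + eig_min L *\<^sub>R proj (perp w)"
      using spectral_decomposition L by blast
    have "A = exp (eig_max L) *\<^sub>R proj w + exp (eig_min L) *\<^sub>R proj (perp w)"
      using L Lw mexp_spectral[OF w] by metis
    thus "L = spectral_log A"
      using spectral_log_spectral[OF w] eig_min_le_max[of L] Lw by simp
  qed
qed

section \<open>Exponential growth rates\<close>

definition exp_order :: "(real \<Rightarrow> real) \<Rightarrow> real \<Rightarrow> bool" where
  "exp_order f R \<longleftrightarrow>
     (\<exists>\<alpha>>0. \<exists>\<beta>>0. \<forall>\<^sub>F m in at_top. \<alpha> * exp (m * R) \<le> f m \<and> f m \<le> \<beta> * exp (m * R))"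

lemma pos_of_exp_lower_bound: "(\<alpha>::real) > 0 \<Longrightarrow> \<alpha> * exp x \<le> y \<Longrightarrow> y > 0"
  using mult_pos_pos[OF _ exp_gt_zero, of \<alpha> x] by linarith

lemma exp_order_ln_div_tendsto:
  assumes "exp_order f R"
  shows "((\<lambda>m. ln (f m) / m) \<longlongrightarrow> R) at_top"
proof -
  obtain \<alpha> \<beta> where "\<alpha> > 0" "\<beta> > 0"
    and bounds: "\<forall>\<^sub>F m in at_top. \<alpha> * exp (m * R) \<le> f m \<and> f m \<le> \<beta> * exp (m * R)"
    using assms unfolding exp_order_def by blast
  have ln_bounds: "ln \<alpha> / m + R \<le> ln (f m) / m \<and> ln (f m) / m \<le> ln \<beta> / m + R"
    if "\<alpha> * exp (m * R) \<le> f m" "f m \<le> \<beta> * exp (m * R)" "m > 0" for m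
  proof -
    have "f m > 0" using pos_of_exp_lower_bound[OF \<open>\<alpha> > 0\<close> that(1)] .
    hence "ln (\<alpha> * exp (m * R)) \<le> ln (f m) \<and> ln (f m) \<le> ln (\<beta> * exp (m * R))"
      using that \<open>\<alpha> > 0\<close> \<open>\<beta> > 0\<close> by simp
    hence "ln \<alpha> + m * R \<le> ln (f m) \<and> ln (f m) \<le> ln \<beta> + m * R"
      using \<open>\<alpha> > 0\<close> \<open>\<beta> > 0\<close> by (simp add: ln_mult)
    hence "(ln \<alpha> + m * R) / m \<le> ln (f m) / m \<and> ln (f m) / m \<le> (ln \<beta> + m * R) / m"
      using \<open>m > 0\<close> by (auto intro: divide_right_mono)
    thus ?thesis using \<open>m > 0\<close> by (simp add: add_divide_distrib)
  qed
  have lim: "((\<lambda>m. c / m + R) \<longlongrightarrow> R) at_top" for c :: real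
    using tendsto_add[OF tendsto_divide_0[OF tendsto_const filterlim_ident[THEN filterlim_at_top_imp_at_infinity]]
        tendsto_const] by simp
  have "\<forall>\<^sub>F m in at_top. ln \<alpha> / m + R \<le> ln (f m) / m \<and> ln (f m) / m \<le> ln \<beta> / m + R"
    using bounds eventually_gt_at_top[of 0] by eventually_elim (use ln_bounds in blast)
  thus ?thesis
    by (intro tendsto_sandwich[OF _ _ lim[of "ln \<alpha>"] lim[of "ln \<beta>"]]) (auto elim: eventually_mono)
qed

lemma exp_order_eventually_pos:
  assumes "exp_order f R"
  shows "\<forall>\<^sub>F m in at_top. f m > 0"
proof -
  obtain \<alpha> \<beta> where "\<alpha> > 0"
    and "\<forall>\<^sub>F m in at_top. \<alpha> * exp (m * R) \<le> f m \<and> f m \<le> \<beta> * exp (m * R)"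
    using assms unfolding exp_order_def by blast
  thus ?thesis by (auto elim!: eventually_mono intro: pos_of_exp_lower_bound)
qed

lemma exp_order_cong:
  assumes "exp_order f R" "\<forall>\<^sub>F m in at_top. f m = g m"
  shows "exp_order g R"
proof -
  obtain \<alpha> \<beta> where "\<alpha> > 0" "\<beta> > 0"
    and "\<forall>\<^sub>F m in at_top. \<alpha> * exp (m * R) \<le> f m \<and> f m \<le> \<beta> * exp (m * R)"
    using assms(1) unfolding exp_order_def by blast
  moreover from this(3) assms(2)
  have "\<forall>\<^sub>F m in at_top. \<alpha> * exp (m * R) \<le> g m \<and> g m \<le> \<beta> * exp (m * R)"
    by eventually_elim simp
  ultimately show ?thesis unfolding exp_order_def by blast
qed

lemma exp_order_sandwich:
  assumes "exp_order g R" "c > 0" "\<forall>\<^sub>F m in at_top. c * g m \<le> f m \<and> f m \<le> g m"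
  shows "exp_order f R"
proof -
  obtain \<alpha> \<beta> where "\<alpha> > 0" "\<beta> > 0"
    and g: "\<forall>\<^sub>F m in at_top. \<alpha> * exp (m * R) \<le> g m \<and> g m \<le> \<beta> * exp (m * R)"
    using assms(1) unfolding exp_order_def by blast
  have "\<forall>\<^sub>F m in at_top. (c * \<alpha>) * exp (m * R) \<le> f m \<and> f m \<le> \<beta> * exp (m * R)"
    using g assms(3)
  proof eventually_elim
    case (elim m)
    hence "c * (\<alpha> * exp (m * R)) \<le> c * g m" using \<open>c > 0\<close> by (intro mult_left_mono) auto
    thus ?case using elim by (simp add: mult.assoc)
  qed
  moreover have "c * \<alpha> > 0" using \<open>\<alpha> > 0\<close> \<open>c > 0\<close> by simp
  ultimately show ?thesis unfolding exp_order_def using \<open>\<beta> > 0\<close> by blast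
qed

lemma exp_order_divide:
  assumes "exp_order f R" "exp_order g S"
  shows "exp_order (\<lambda>m. f m / g m) (R - S)"
proof -
  obtain \<alpha> \<beta> where "\<alpha> > 0" "\<beta> > 0"
    and f: "\<forall>\<^sub>F m in at_top. \<alpha> * exp (m * R) \<le> f m \<and> f m \<le> \<beta> * exp (m * R)"
    using assms(1) unfolding exp_order_def by blast
  obtain \<gamma> \<delta> where "\<gamma> > 0" "\<delta> > 0"
    and g: "\<forall>\<^sub>F m in at_top. \<gamma> * exp (m * S) \<le> g m \<and> g m \<le> \<delta> * exp (m * S)"
    using assms(2) unfolding exp_order_def by blast
  have "\<forall>\<^sub>F m in at_top. (\<alpha> / \<delta>) * exp (m * (R - S)) \<le> f m / g m \<and> f m / g m \<le> (\<beta> / \<gamma>) * exp (m * (R - S))"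
    using f g
  proof eventually_elim
    case (elim m)
    have "(\<alpha> * exp (m * R)) / (\<delta> * exp (m * S)) \<le> f m / g m"
      using elim \<open>\<alpha> > 0\<close> \<open>\<gamma> > 0\<close>
      by (intro frac_le) (auto intro: order.strict_trans2[rotated] order.trans[rotated])
    moreover have "f m / g m \<le> (\<beta> * exp (m * R)) / (\<gamma> * exp (m * S))"
      using elim \<open>\<alpha> > 0\<close> \<open>\<gamma> > 0\<close> by (intro frac_le) (auto intro: order.trans[rotated])
    ultimately show ?case using \<open>\<delta> > 0\<close> \<open>\<gamma> > 0\<close>
      by (simp add: right_diff_distrib exp_diff field_simps)
  qed
  moreover have "\<alpha> / \<delta> > 0" "\<beta> / \<gamma> > 0"
    using \<open>\<alpha> > 0\<close> \<open>\<beta> > 0\<close> \<open>\<gamma> > 0\<close> \<open>\<delta> > 0\<close> by simp_all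
  ultimately show ?thesis unfolding exp_order_def by blast
qed

lemma exp_order_sum:
  assumes "finite I" "\<And>i. i \<in> I \<Longrightarrow> c i \<ge> 0" "\<And>i. i \<in> I \<Longrightarrow> c i \<noteq> 0 \<Longrightarrow> e i \<le> R"
    and "k \<in> I" "c k > 0" "e k = R"
  shows "exp_order (\<lambda>m. \<Sum>i\<in>I. c i * exp (m * e i)) R"
  unfolding exp_order_def
proof (intro exI conjI)
  have "c k \<le> sum c I" by (rule member_le_sum) (use assms in auto)
  thus "c k > 0" "sum c I > 0" using assms(5) by simp_all
  show "\<forall>\<^sub>F m in at_top. c k * exp (m * R) \<le> (\<Sum>i\<in>I. c i * exp (m * e i)) \<and>
      (\<Sum>i\<in>I. c i * exp (m * e i)) \<le> sum c I * exp (m * R)"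
    using eventually_ge_at_top[of 0]
  proof eventually_elim
    case (elim m)
    have "c i * exp (m * e i) \<le> c i * exp (m * R)" if "i \<in> I" for i
      using assms(2,3)[OF that] elim by (cases "c i = 0") (auto intro: mult_left_mono)
    hence "(\<Sum>i\<in>I. c i * exp (m * e i)) \<le> sum c I * exp (m * R)"
      by (simp add: sum_distrib_right sum_mono)
    moreover have "c k * exp (m * e k) \<le> (\<Sum>i\<in>I. c i * exp (m * e i))"
      by (rule member_le_sum) (use assms in auto)
    ultimately show ?case using assms(6) by simp
  qed
qed

lemma tendsto_exp_neg_at_top:
  assumes "d < 0"
  shows "((\<lambda>m::real. exp (m * d)) \<longlongrightarrow> 0) at_top"
proof -
  have "filterlim (\<lambda>m::real. d * m) at_bot at_top"
    by (rule filterlim_tendsto_neg_mult_at_bot[OF tendsto_const assms filterlim_ident])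
  thus ?thesis by (simp add: mult.commute filterlim_compose[OF exp_at_bot])
qed

lemma exp_order_scaled_tendsto_0:
  assumes "exp_order f R" "R < S"
  shows "((\<lambda>m. exp (- (m * S)) * f m) \<longlongrightarrow> 0) at_top"
proof -
  obtain \<alpha> \<beta> where "\<alpha> > 0" and "\<beta> > 0"
    and f: "\<forall>\<^sub>F m in at_top. \<alpha> * exp (m * R) \<le> f m \<and> f m \<le> \<beta> * exp (m * R)"
    using assms(1) unfolding exp_order_def by blast
  have "((\<lambda>m. \<beta> * exp (m * (R - S))) \<longlongrightarrow> \<beta> * 0) at_top"
    using assms(2) by (intro tendsto_mult tendsto_const tendsto_exp_neg_at_top) simp
  hence upper: "((\<lambda>m. \<beta> * exp (m * (R - S))) \<longlongrightarrow> 0) at_top" by simp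
  have "\<forall>\<^sub>F m in at_top. 0 \<le> exp (- (m * S)) * f m \<and> exp (- (m * S)) * f m \<le> \<beta> * exp (m * (R - S))"
    using f
  proof eventually_elim
    case (elim m)
    have "exp (- (m * S)) * f m \<le> exp (- (m * S)) * (\<beta> * exp (m * R))"
      using elim by (intro mult_left_mono) auto
    also have "\<dots> = \<beta> * exp (m * (R - S))"
      by (simp add: algebra_simps flip: exp_add)
    finally have "exp (- (m * S)) * f m \<le> \<beta> * exp (m * (R - S))" .
    moreover have "f m > 0" using pos_of_exp_lower_bound[OF \<open>\<alpha> > 0\<close>] elim by blast
    ultimately show ?case by simp
  qed
  hence "\<forall>\<^sub>F m in at_top. 0 \<le> exp (- (m * S)) * f m"
    and "\<forall>\<^sub>F m in at_top. exp (- (m * S)) * f m \<le> \<beta> * exp (m * (R - S))"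
    unfolding eventually_conj_iff by blast+
  thus ?thesis by (rule tendsto_sandwich[OF _ _ tendsto_const upper])
qed

lemma scaled_exp_sum_tendsto:
  fixes c :: "'i \<Rightarrow> 'a::real_normed_vector"
  assumes "\<And>i. i \<in> I \<Longrightarrow> e i \<le> R"
  shows "((\<lambda>m. exp (- (m * R)) *\<^sub>R (\<Sum>i\<in>I. exp (m * e i) *\<^sub>R c i))
          \<longlongrightarrow> (\<Sum>i\<in>I. if e i = R then c i else 0)) at_top"
proof -
  have "exp (- (m * R)) * exp (m * e i) = exp (m * (e i - R))" for m i
    by (simp add: algebra_simps flip: exp_add)
  hence eq: "exp (- (m * R)) *\<^sub>R (\<Sum>i\<in>I. exp (m * e i) *\<^sub>R c i) = (\<Sum>i\<in>I. exp (m * (e i - R)) *\<^sub>R c i)"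
    for m by (simp add: scaleR_sum_right)
  have "((\<lambda>m. exp (m * (e i - R)) *\<^sub>R c i) \<longlongrightarrow> (if e i = R then c i else 0)) at_top"
    if "i \<in> I" for i
  proof (cases "e i = R")
    case False
    hence "e i - R < 0" using assms[OF that] by simp
    from tendsto_scaleR[OF tendsto_exp_neg_at_top[OF this] tendsto_const[of "c i"]] False
    show ?thesis by simp
  qed simp
  thus ?thesis unfolding eq by (rule tendsto_sum)
qed

lemma tendsto_scaleR_bounded:
  fixes P :: "'b \<Rightarrow> 'a::real_normed_vector"
  assumes "(\<psi> \<longlongrightarrow> \<gamma>) F" "\<forall>\<^sub>F x in F. norm (P x) \<le> B" "\<gamma> \<noteq> 0 \<Longrightarrow> (P \<longlongrightarrow> P\<^sub>0) F"
  shows "((\<lambda>x. \<psi> x *\<^sub>R P x) \<longlongrightarrow> \<gamma> *\<^sub>R P\<^sub>0) F"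
proof (cases "\<gamma> = 0")
  case True
  have "\<forall>\<^sub>F x in F. norm (\<psi> x *\<^sub>R P x) \<le> norm (\<psi> x) * B"
    using assms(2) by eventually_elim (simp add: mult_left_mono)
  with assms(1) have "((\<lambda>x. \<psi> x *\<^sub>R P x) \<longlongrightarrow> 0) F"
    unfolding True by (rule tendsto_0_le)
  thus ?thesis using True by simp
next
  case False
  thus ?thesis using tendsto_scaleR[OF assms(1,3)] by simp
qed

lemma tendsto_trace:
  fixes f :: "'a \<Rightarrow> real^'n^'n"
  assumes "(f \<longlongrightarrow> A) F"
  shows "((\<lambda>x. trace (f x)) \<longlongrightarrow> trace A) F"
  unfolding trace_def by (auto intro!: tendsto_sum tendsto_vec_nth assms)

section \<open>Sums of exponentially weighted rank-one matrices\<close>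

datatype exp_term = ExpTerm (expo: real) (weight: real) (dir: "real^2")

definition expsum :: "exp_term list \<Rightarrow> real \<Rightarrow> real^2^2" where
  "expsum D m = (\<Sum>t\<leftarrow>D. (weight t * exp (m * expo t)) *\<^sub>R outer (dir t))"

lemma expsum_append: "expsum (D1 @ D2) m = expsum D1 m + expsum D2 m"
  by (simp add: expsum_def)

definition admissible :: "exp_term list \<Rightarrow> bool" where
  "admissible D \<longleftrightarrow> (\<forall>t\<in>set D. weight t > 0 \<and> dir t \<noteq> 0) \<and>
     (\<exists>t1\<in>set D. \<exists>t2\<in>set D. cross2 (dir t1) (dir t2) \<noteq> 0)"

lemma admissible_append: "admissible D1 \<Longrightarrow> admissible D2 \<Longrightarrow> admissible (D1 @ D2)"
  unfolding admissible_def by auto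

definition top_exp :: "exp_term list \<Rightarrow> real" where
  "top_exp D = Max (expo ` set D)"

definition pair_exp :: "exp_term list \<Rightarrow> real" where
  "pair_exp D = Max ((\<lambda>(t1, t2). expo t1 + expo t2) `
     {(t1, t2) \<in> set D \<times> set D. cross2 (dir t1) (dir t2) \<noteq> 0})"

definition cross_exp :: "exp_term list \<Rightarrow> real^2 \<Rightarrow> real" where
  "cross_exp D w = Max (expo ` {t \<in> set D. cross2 (dir t) w \<noteq> 0})"

definition low_exp :: "exp_term list \<Rightarrow> real" where
  "low_exp D = pair_exp D - top_exp D"

text \<open>The direction of an arbitrary top term: if \<open>low_exp D < top_exp D\<close> all top terms are
  parallel, and otherwise the choice does not affect \<open>asymp_log D\<close>.\<close>

definition top_dir :: "exp_term list \<Rightarrow> real^2" where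
  "top_dir D = dir (SOME t. t \<in> set D \<and> expo t = top_exp D)"

definition asymp_log :: "exp_term list \<Rightarrow> real^2^2" where
  "asymp_log D = top_exp D *\<^sub>R proj (top_dir D) + low_exp D *\<^sub>R proj (perp (top_dir D))"

lemma finite_pair_exps:
  "finite ((\<lambda>(t1, t2). expo t1 + expo t2) ` {(t1, t2) \<in> set D \<times> set D. cross2 (dir t1) (dir t2) \<noteq> 0})"
  by (rule finite_imageI, rule finite_subset[of _ "set D \<times> set D"]) auto

lemma top_exp_ge: "t \<in> set D \<Longrightarrow> expo t \<le> top_exp D"
  unfolding top_exp_def by (rule Max_ge) auto

lemma pair_exp_ge: "t1 \<in> set D \<Longrightarrow> t2 \<in> set D \<Longrightarrow> cross2 (dir t1) (dir t2) \<noteq> 0 \<Longrightarrow> expo t1 + expo t2 \<le> pair_exp D"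
  unfolding pair_exp_def by (rule Max_ge[OF finite_pair_exps]) force

lemma cross_exp_ge: "t \<in> set D \<Longrightarrow> cross2 (dir t) w \<noteq> 0 \<Longrightarrow> expo t \<le> cross_exp D w"
  unfolding cross_exp_def by (rule Max_ge) auto

context
  fixes D assumes D: "admissible D"
begin

lemma admissible_weight_pos: "t \<in> set D \<Longrightarrow> weight t > 0"
  and admissible_dir_nonzero: "t \<in> set D \<Longrightarrow> dir t \<noteq> 0"
  using D by (auto simp: admissible_def)

lemma top_term_exists: "\<exists>t. t \<in> set D \<and> expo t = top_exp D"
proof -
  have "top_exp D \<in> expo ` set D" unfolding top_exp_def using D by (intro Max_in) (auto simp: admissible_def)
  thus ?thesis by auto
qed

lemma top_dir_term: obtains t where "t \<in> set D" "expo t = top_exp D" "dir t = top_dir D"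
  using someI_ex[OF top_term_exists] unfolding top_dir_def by blast

lemma top_dir_nonzero: "top_dir D \<noteq> 0"
proof -
  obtain t where "t \<in> set D" "dir t = top_dir D" using top_dir_term by blast
  thus ?thesis using admissible_dir_nonzero by metis
qed

lemma pair_exp_attained:
  obtains t1 t2 where "t1 \<in> set D" "t2 \<in> set D" "cross2 (dir t1) (dir t2) \<noteq> 0" "expo t1 + expo t2 = pair_exp D"
proof -
  have "pair_exp D \<in> (\<lambda>(t1, t2). expo t1 + expo t2) ` {(t1, t2) \<in> set D \<times> set D. cross2 (dir t1) (dir t2) \<noteq> 0}"
    unfolding pair_exp_def using D by (intro Max_in[OF finite_pair_exps]) (auto simp: admissible_def)
  thus ?thesis using that by auto
qed

lemma cross_exp_attained:
  assumes "w \<noteq> 0"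
  obtains t where "t \<in> set D" "cross2 (dir t) w \<noteq> 0" "expo t = cross_exp D w"
proof -
  obtain t1 t2 where t: "t1 \<in> set D" "t2 \<in> set D" "cross2 (dir t1) (dir t2) \<noteq> 0"
    using D by (auto simp: admissible_def)
  \<comment> \<open>\<open>w\<close> cannot be parallel to two non-parallel directions.\<close>
  have "cross2 (dir t1) w \<noteq> 0 \<or> cross2 (dir t2) w \<noteq> 0"
    using t(3) cross2_trans[of "dir t1" w "dir t2"] cross2_commute[of "dir t2" w] assms by auto
  hence "{t \<in> set D. cross2 (dir t) w \<noteq> 0} \<noteq> {}" using t by auto
  hence "cross_exp D w \<in> expo ` {t \<in> set D. cross2 (dir t) w \<noteq> 0}"
    unfolding cross_exp_def by (intro Max_in) auto
  thus ?thesis using that by auto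
qed

lemma pair_exp_eq_top_exp_add_cross_exp:
  assumes t: "t \<in> set D" "expo t = top_exp D"
  shows "pair_exp D = top_exp D + cross_exp D (dir t)"
proof (rule antisym)
  have dt: "dir t \<noteq> 0" using admissible_dir_nonzero[OF t(1)] .
  obtain t1 t2 where t12: "t1 \<in> set D" "t2 \<in> set D" "cross2 (dir t1) (dir t2) \<noteq> 0"
    and pair: "expo t1 + expo t2 = pair_exp D"
    using pair_exp_attained by blast
  have "cross2 (dir t1) (dir t) \<noteq> 0 \<or> cross2 (dir t2) (dir t) \<noteq> 0"
    using t12(3) cross2_trans[of "dir t1" "dir t" "dir t2"] cross2_commute[of "dir t2" "dir t"] dt by auto
  thus "pair_exp D \<le> top_exp D + cross_exp D (dir t)"
    using pair top_exp_ge[OF t12(1)] top_exp_ge[OF t12(2)] cross_exp_ge[OF t12(1)] cross_exp_ge[OF t12(2)]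
    by force
  obtain t' where "t' \<in> set D" "cross2 (dir t') (dir t) \<noteq> 0" "expo t' = cross_exp D (dir t)"
    using cross_exp_attained[OF dt] by blast
  thus "top_exp D + cross_exp D (dir t) \<le> pair_exp D"
    using pair_exp_ge[OF t(1), of t'] cross2_commute[of "dir t" "dir t'"] t(2) by simp
qed

lemma low_exp_eq_cross_exp: "low_exp D = cross_exp D (top_dir D)"
proof -
  obtain t where "t \<in> set D" "expo t = top_exp D" "dir t = top_dir D" using top_dir_term by blast
  thus ?thesis using pair_exp_eq_top_exp_add_cross_exp unfolding low_exp_def by simp
qed

lemma low_exp_le_top_exp: "low_exp D \<le> top_exp D"
proof -
  obtain t where "t \<in> set D" "expo t = cross_exp D (top_dir D)"
    using cross_exp_attained[OF top_dir_nonzero] by blast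
  thus ?thesis using top_exp_ge unfolding low_exp_eq_cross_exp by metis
qed

lemma top_term_parallel:
  assumes "low_exp D < top_exp D" "t \<in> set D" "expo t = top_exp D"
  shows "cross2 (dir t) (top_dir D) = 0"
  using cross_exp_ge[OF assms(2), of "top_dir D"] assms unfolding low_exp_eq_cross_exp by linarith

lemma asymp_log_eq_shifted_proj: "asymp_log D = low_exp D *\<^sub>R mat 1 + (top_exp D - low_exp D) *\<^sub>R proj (top_dir D)"
  unfolding asymp_log_def by (rule spectral_eq_shifted_proj[OF top_dir_nonzero])

end

lemma expsum_eq_sum_nth:
  "expsum D m = (\<Sum>i<length D. (weight (D!i) * exp (m * expo (D!i))) *\<^sub>R outer (dir (D!i)))"
  unfolding expsum_def sum_list_sum_nth by (simp add: atLeast0LessThan)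

lemma transpose_expsum: "transpose (expsum D m) = expsum D m"
  unfolding expsum_eq_sum_nth sum_outer by (rule transpose_sym2)

context
  fixes D assumes D: "admissible D"
begin

lemma exp_order_trace_expsum: "exp_order (\<lambda>m. trace (expsum D m)) (top_exp D)"
proof -
  obtain t where t: "t \<in> set D" "expo t = top_exp D" using top_term_exists[OF D] by blast
  then obtain k where k: "k < length D" "D!k = t" by (auto simp: in_set_conv_nth)
  have pos: "weight (D!i) * sqnorm (dir (D!i)) > 0" if "i < length D" for i
    using that admissible_weight_pos[OF D] admissible_dir_nonzero[OF D] sqnorm_pos by simp
  have "exp_order (\<lambda>m. \<Sum>i<length D. (weight (D!i) * sqnorm (dir (D!i))) * exp (m * expo (D!i))) (top_exp D)"
    using pos k t top_exp_ge[of _ D] by (intro exp_order_sum[where k = k]) (auto intro: less_imp_le)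
  thus ?thesis unfolding expsum_eq_sum_nth trace_sum_outer by (simp add: mult_ac)
qed

lemma exp_order_det_expsum: "exp_order (\<lambda>m. det (expsum D m)) (pair_exp D)"
proof -
  let ?I = "{..<length D} \<times> {..<length D}"
  define c where "c = (\<lambda>(i, j). weight (D!i) * weight (D!j) * (cross2 (dir (D!i)) (dir (D!j)))^2 / 2)"
  define e where "e = (\<lambda>(i, j). expo (D!i) + expo (D!j))"
  obtain t1 t2 where t: "t1 \<in> set D" "t2 \<in> set D" "cross2 (dir t1) (dir t2) \<noteq> 0"
    "expo t1 + expo t2 = pair_exp D"
    using pair_exp_attained[OF D] by blast
  then obtain i j where ij: "i < length D" "D!i = t1" "j < length D" "D!j = t2"
    by (auto simp: in_set_conv_nth)
  have "exp_order (\<lambda>m. \<Sum>p\<in>?I. c p * exp (m * e p)) (pair_exp D)"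
  proof (rule exp_order_sum[where k = "(i, j)"])
    show "c p \<ge> 0" if "p \<in> ?I" for p
      using that admissible_weight_pos[OF D] by (auto simp: c_def less_imp_le)
    show "e p \<le> pair_exp D" if "p \<in> ?I" "c p \<noteq> 0" for p
      using that pair_exp_ge[of "D!fst p" D "D!snd p"] by (auto simp: c_def e_def)
    show "c (i, j) > 0" "e (i, j) = pair_exp D"
      using ij t admissible_weight_pos[OF D] by (auto simp: c_def e_def)
  qed (use ij in auto)
  moreover have "det (expsum D m) = (\<Sum>p\<in>?I. c p * exp (m * e p))" for m
    unfolding expsum_eq_sum_nth det_sum_outer sum.cartesian_product sum_divide_distrib
    by (intro sum.cong refl) (auto simp: c_def e_def exp_add distrib_left mult_ac)
  ultimately show ?thesis by simp
qed

lemma eventually_eig_min_expsum_pos: "\<forall>\<^sub>F m in at_top. eig_min (expsum D m) > 0"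
  using exp_order_eventually_pos[OF exp_order_trace_expsum]
    exp_order_eventually_pos[OF exp_order_det_expsum]
  by eventually_elim (simp add: eig_min_pos transpose_expsum)

lemma exp_order_eig_max_expsum: "exp_order (\<lambda>m. eig_max (expsum D m)) (top_exp D)"
proof (rule exp_order_sandwich[OF exp_order_trace_expsum])
  show "\<forall>\<^sub>F m in at_top. 1 / 2 * trace (expsum D m) \<le> eig_max (expsum D m) \<and> eig_max (expsum D m) \<le> trace (expsum D m)"
    using eventually_eig_min_expsum_pos
  proof eventually_elim
    case (elim m)
    show ?case using half_trace_le_eig_max[of "expsum D m"] eig_max_add_eig_min[of "expsum D m"] elim
      by linarith
  qed
qed simp

lemma exp_order_eig_min_expsum: "exp_order (\<lambda>m. eig_min (expsum D m)) (low_exp D)"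
proof (rule exp_order_cong)
  show "exp_order (\<lambda>m. det (expsum D m) / eig_max (expsum D m)) (low_exp D)"
    unfolding low_exp_def by (rule exp_order_divide[OF exp_order_det_expsum exp_order_eig_max_expsum])
  show "\<forall>\<^sub>F m in at_top. det (expsum D m) / eig_max (expsum D m) = eig_min (expsum D m)"
    using exp_order_eventually_pos[OF exp_order_eig_max_expsum]
  proof eventually_elim
    case (elim m)
    thus ?case using eig_max_mult_eig_min[OF transpose_expsum, of D m] by (simp add: field_simps)
  qed
qed

lemma scaled_expsum_tendsto:
  "((\<lambda>m. exp (- (m * top_exp D)) *\<^sub>R expsum D m) \<longlongrightarrow>
     (\<Sum>i<length D. if expo (D!i) = top_exp D then weight (D!i) *\<^sub>R outer (dir (D!i)) else 0)) at_top"
  unfolding expsum_eq_sum_nth scaleR_scaleR[symmetric] mult.commute[of "weight _"]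
  by (rule scaled_exp_sum_tendsto) (simp add: top_exp_ge)

lemma top_part_expsum:
  assumes "low_exp D < top_exp D"
  obtains \<kappa> where "\<kappa> > 0"
    "(\<Sum>i<length D. if expo (D!i) = top_exp D then weight (D!i) *\<^sub>R outer (dir (D!i)) else 0) =
     \<kappa> *\<^sub>R outer (top_dir D)"
proof
  let ?u = "top_dir D"
  define \<kappa> where "\<kappa> = (\<Sum>i<length D. if expo (D!i) = top_exp D then weight (D!i) * sqnorm (dir (D!i)) / sqnorm ?u else 0)"
  have "(\<Sum>i<length D. if expo (D!i) = top_exp D then weight (D!i) *\<^sub>R outer (dir (D!i)) else 0) =
      (\<Sum>i<length D. (if expo (D!i) = top_exp D then weight (D!i) * sqnorm (dir (D!i)) / sqnorm ?u else 0) *\<^sub>R outer ?u)"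
    using top_term_parallel[OF D assms] outer_parallel[OF top_dir_nonzero[OF D]] by (intro sum.cong) auto
  thus "(\<Sum>i<length D. if expo (D!i) = top_exp D then weight (D!i) *\<^sub>R outer (dir (D!i)) else 0) = \<kappa> *\<^sub>R outer ?u"
    by (simp add: \<kappa>_def scaleR_sum_left)
  obtain t where "t \<in> set D" "expo t = top_exp D" using top_term_exists[OF D] by blast
  then obtain k where k: "k < length D" "expo (D!k) = top_exp D" by (auto simp: in_set_conv_nth)
  have pos: "weight (D!i) * sqnorm (dir (D!i)) / sqnorm ?u > 0" if "i < length D" for i
    using that admissible_weight_pos[OF D] admissible_dir_nonzero[OF D] sqnorm_pos top_dir_nonzero[OF D] by simp
  have "(if expo (D!k) = top_exp D then weight (D!k) * sqnorm (dir (D!k)) / sqnorm ?u else 0) \<le> \<kappa>"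
    unfolding \<kappa>_def by (rule member_le_sum) (use k pos in \<open>auto intro: less_imp_le\<close>)
  thus "\<kappa> > 0" using pos[OF k(1)] k(2) by simp
qed

lemma top_eigproj_expsum_tendsto:
  assumes "low_exp D < top_exp D"
  shows "((\<lambda>m. top_eigproj (expsum D m)) \<longlongrightarrow> proj (top_dir D)) at_top"
proof -
  let ?u = "top_dir D" and ?s = "\<lambda>m. exp (- (m * top_exp D))"
  let ?l1 = "\<lambda>m. eig_max (expsum D m)" and ?l2 = "\<lambda>m. eig_min (expsum D m)"
  obtain \<kappa> where "\<kappa> > 0"
    and top_part: "(\<Sum>i<length D. if expo (D!i) = top_exp D then weight (D!i) *\<^sub>R outer (dir (D!i)) else 0) =
      \<kappa> *\<^sub>R outer ?u"
    using top_part_expsum[OF assms] by blast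
  have lim_F: "((\<lambda>m. ?s m *\<^sub>R expsum D m) \<longlongrightarrow> \<kappa> *\<^sub>R outer ?u) at_top"
    using scaled_expsum_tendsto unfolding top_part .
  have lim_l2: "((\<lambda>m. ?s m * ?l2 m) \<longlongrightarrow> 0) at_top"
    by (rule exp_order_scaled_tendsto_0[OF exp_order_eig_min_expsum assms])
  have "?s m * (?l1 m - ?l2 m) = trace (?s m *\<^sub>R expsum D m) - 2 * (?s m * ?l2 m)" for m
    unfolding trace_scaleR by (simp add: algebra_simps flip: eig_max_add_eig_min[of "expsum D m"])
  hence lim_gap: "((\<lambda>m. ?s m * (?l1 m - ?l2 m)) \<longlongrightarrow> \<kappa> * sqnorm ?u) at_top"
    using tendsto_diff[OF tendsto_trace[OF lim_F] tendsto_mult[OF tendsto_const lim_l2, of 2]]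
    by (simp add: trace_scaleR trace_outer)
  have gap_pos: "\<kappa> * sqnorm ?u > 0" using \<open>\<kappa> > 0\<close> sqnorm_pos[OF top_dir_nonzero[OF D]] by simp
  have "((\<lambda>m. (1 / (?s m * (?l1 m - ?l2 m))) *\<^sub>R (?s m *\<^sub>R expsum D m - (?s m * ?l2 m) *\<^sub>R mat 1))
      \<longlongrightarrow> (1 / (\<kappa> * sqnorm ?u)) *\<^sub>R (\<kappa> *\<^sub>R outer ?u - 0 *\<^sub>R mat 1)) at_top"
    using gap_pos by (intro tendsto_scaleR[OF tendsto_divide[OF tendsto_const lim_gap]
        tendsto_diff[OF lim_F tendsto_scaleR[OF lim_l2 tendsto_const]]]) auto
  moreover have "(1 / (\<kappa> * sqnorm ?u)) *\<^sub>R (\<kappa> *\<^sub>R outer ?u - 0 *\<^sub>R mat 1) = proj ?u"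
    using \<open>\<kappa> > 0\<close> by (simp add: proj_def)
  moreover have "\<forall>\<^sub>F m in at_top. (1 / (?s m * (?l1 m - ?l2 m))) *\<^sub>R (?s m *\<^sub>R expsum D m - (?s m * ?l2 m) *\<^sub>R mat 1)
      = top_eigproj (expsum D m)"
    using order_tendstoD(1)[OF lim_gap gap_pos]
  proof eventually_elim
    case (elim m)
    hence "?l1 m \<noteq> ?l2 m" by auto
    thus ?case by (simp add: top_eigproj_def scaleR_diff_right scaleR_scaleR)
  qed
  ultimately show ?thesis by (simp add: tendsto_cong)
qed

theorem expsum_log_tendsto: "((\<lambda>m. (1 / m) *\<^sub>R mlog (expsum D m)) \<longlongrightarrow> asymp_log D) at_top"
proof -
  let ?l1 = "\<lambda>m. eig_max (expsum D m)" and ?l2 = "\<lambda>m. eig_min (expsum D m)"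
  have lim_low: "((\<lambda>m. ln (?l2 m) / m) \<longlongrightarrow> low_exp D) at_top"
    by (rule exp_order_ln_div_tendsto[OF exp_order_eig_min_expsum])
  have lim_gap: "((\<lambda>m. (ln (?l1 m) - ln (?l2 m)) / m) \<longlongrightarrow> top_exp D - low_exp D) at_top"
    unfolding diff_divide_distrib
    by (intro tendsto_diff lim_low exp_order_ln_div_tendsto[OF exp_order_eig_max_expsum])
  have "((\<lambda>m. (ln (?l2 m) / m) *\<^sub>R mat 1 + ((ln (?l1 m) - ln (?l2 m)) / m) *\<^sub>R top_eigproj (expsum D m))
      \<longlongrightarrow> low_exp D *\<^sub>R mat 1 + (top_exp D - low_exp D) *\<^sub>R proj (top_dir D)) at_top"
    using low_exp_le_top_exp[OF D]
    by (intro tendsto_add tendsto_scaleR[OF lim_low tendsto_const] tendsto_scaleR_bounded[OF lim_gap, where B = 1]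
        always_eventually allI norm_top_eigproj_le transpose_expsum top_eigproj_expsum_tendsto) auto
  moreover have "\<forall>\<^sub>F m in at_top. (ln (?l2 m) / m) *\<^sub>R mat 1 + ((ln (?l1 m) - ln (?l2 m)) / m) *\<^sub>R top_eigproj (expsum D m)
      = (1 / m) *\<^sub>R mlog (expsum D m)"
    using eventually_eig_min_expsum_pos
    by eventually_elim (simp add: mlog_eq_spectral_log transpose_expsum spectral_log_def scaleR_add_right divide_inverse_commute)
  ultimately show ?thesis unfolding asymp_log_eq_shifted_proj[OF D] by (simp add: tendsto_cong)
qed

end

section \<open>Eigen-terms and transitivity\<close>

definition spectral_terms :: "real^2 \<Rightarrow> real \<Rightarrow> real \<Rightarrow> exp_term list" where
  "spectral_terms u x y = [ExpTerm x (1 / sqnorm u) u, ExpTerm y (1 / sqnorm u) (perp u)]"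

definition eigen_terms :: "exp_term list \<Rightarrow> exp_term list" where
  "eigen_terms D = spectral_terms (top_dir D) (top_exp D) (low_exp D)"

lemma admissible_spectral_terms: "u \<noteq> 0 \<Longrightarrow> admissible (spectral_terms u x y)"
  using sqnorm_pos[of u] perp_nonzero[of u]
  by (simp add: admissible_def spectral_terms_def cross2_perp)

lemma top_exp_spectral_terms: "y \<le> x \<Longrightarrow> top_exp (spectral_terms u x y) = x"
  by (simp add: top_exp_def spectral_terms_def)

lemma cross_exp_spectral_terms:
  assumes "u \<noteq> 0" "w \<noteq> 0" "y \<le> x"
  shows "cross_exp (spectral_terms u x y) w = (if cross2 u w \<noteq> 0 then x else y)"
proof (cases "cross2 u w = 0")
  case True
  hence "cross2 w u = 0" using cross2_commute[of w u] by simp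
  hence "cross2 (perp u) w \<noteq> 0"
    using cross2_perp_nonzero[OF assms(1,2)] cross2_commute[of "perp u" w] by simp
  hence "{t \<in> set (spectral_terms u x y). cross2 (dir t) w \<noteq> 0} = {ExpTerm y (1 / sqnorm u) (perp u)}"
    using True by (auto simp: spectral_terms_def)
  thus ?thesis using True by (simp add: cross_exp_def)
next
  case False
  have "cross_exp (spectral_terms u x y) w = x"
    unfolding cross_exp_def
    by (rule Max_eqI) (use False assms(3) in \<open>auto simp: spectral_terms_def image_iff\<close>)
  thus ?thesis using False by simp
qed

lemma cross_exp_parallel:
  assumes "w \<noteq> 0" "w' \<noteq> 0" "cross2 w w' = 0"
  shows "cross_exp D w = cross_exp D w'"
proof -
  have "cross2 v w = 0 \<longleftrightarrow> cross2 v w' = 0" for v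
    using assms cross2_trans[of v w w'] cross2_trans[of v w' w] cross2_commute[of w w'] by auto
  thus ?thesis unfolding cross_exp_def by simp
qed

context
  fixes D assumes D: "admissible D"
begin

lemma cross_exp_eq:
  assumes "w \<noteq> 0"
  shows "cross_exp D w = (if cross2 (top_dir D) w \<noteq> 0 then top_exp D else low_exp D)"
proof (cases "cross2 (top_dir D) w = 0")
  case True
  thus ?thesis
    using cross_exp_parallel[OF assms top_dir_nonzero[OF D]] cross2_commute[of w]
    by (simp add: low_exp_eq_cross_exp[OF D])
next
  case False
  obtain t where t: "t \<in> set D" "expo t = top_exp D" "dir t = top_dir D"
    using top_dir_term[OF D] by blast
  obtain t' where "t' \<in> set D" "expo t' = cross_exp D w" using cross_exp_attained[OF D assms] by blast
  hence "cross_exp D w \<le> top_exp D" using top_exp_ge by metis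
  moreover have "top_exp D \<le> cross_exp D w" using cross_exp_ge[OF t(1)] t False by metis
  ultimately show ?thesis using False by simp
qed

lemma admissible_eigen_terms: "admissible (eigen_terms D)"
  unfolding eigen_terms_def by (rule admissible_spectral_terms[OF top_dir_nonzero[OF D]])

lemma top_exp_eigen_terms: "top_exp (eigen_terms D) = top_exp D"
  unfolding eigen_terms_def by (rule top_exp_spectral_terms[OF low_exp_le_top_exp[OF D]])

lemma cross_exp_eigen_terms: "w \<noteq> 0 \<Longrightarrow> cross_exp (eigen_terms D) w = cross_exp D w"
  unfolding eigen_terms_def
  by (simp add: cross_exp_spectral_terms top_dir_nonzero[OF D] low_exp_le_top_exp[OF D] cross_exp_eq)

end

lemma top_exp_append:
  assumes "admissible D1" "admissible D2"
  shows "top_exp (D1 @ D2) = max (top_exp D1) (top_exp D2)"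
proof -
  have "set D1 \<noteq> {}" "set D2 \<noteq> {}" using assms by (auto simp: admissible_def)
  thus ?thesis unfolding top_exp_def by (simp add: image_Un Max_Un)
qed

lemma cross_exp_append:
  assumes "admissible D1" "admissible D2" "w \<noteq> 0"
  shows "cross_exp (D1 @ D2) w = max (cross_exp D1 w) (cross_exp D2 w)"
proof -
  obtain t1 t2 where "t1 \<in> set D1" "cross2 (dir t1) w \<noteq> 0" "t2 \<in> set D2" "cross2 (dir t2) w \<noteq> 0"
    using cross_exp_attained[OF assms(1,3)] cross_exp_attained[OF assms(2,3)] by metis
  hence "{t \<in> set D1. cross2 (dir t) w \<noteq> 0} \<noteq> {}" "{t \<in> set D2. cross2 (dir t) w \<noteq> 0} \<noteq> {}"
    by blast+
  moreover have "{t \<in> set (D1 @ D2). cross2 (dir t) w \<noteq> 0} =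
      {t \<in> set D1. cross2 (dir t) w \<noteq> 0} \<union> {t \<in> set D2. cross2 (dir t) w \<noteq> 0}" by auto
  ultimately show ?thesis unfolding cross_exp_def by (simp add: image_Un Max_Un)
qed

lemma asymp_log_cong: "set D = set D' \<Longrightarrow> asymp_log D = asymp_log D'"
  by (simp add: asymp_log_def top_dir_def top_exp_def low_exp_def pair_exp_def)

lemma asymp_log_append_eigen_terms_ordered:
  assumes D1: "admissible D1" and D2: "admissible D2" and le: "top_exp D2 \<le> top_exp D1"
  shows "asymp_log (D1 @ D2) = asymp_log (eigen_terms D1 @ eigen_terms D2)"
proof -
  define D E where "D = D1 @ D2" and "E = eigen_terms D1 @ eigen_terms D2"
  define u where "u = top_dir D1"
  have u: "u \<noteq> 0" unfolding u_def by (rule top_dir_nonzero[OF D1])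
  have D: "admissible D" and E: "admissible E"
    unfolding D_def E_def by (intro admissible_append admissible_eigen_terms D1 D2)+
  have top: "top_exp D = top_exp D1" "top_exp E = top_exp D1"
    unfolding D_def E_def using le
    by (simp_all add: top_exp_append admissible_eigen_terms top_exp_eigen_terms D1 D2)
  \<comment> \<open>A top term of \<open>D1\<close> with direction \<open>u\<close> is a top term both of \<open>D\<close> and of \<open>E\<close>.\<close>
  obtain t where t: "t \<in> set D" "expo t = top_exp D" "dir t = u"
    using top_dir_term[OF D1] top unfolding D_def u_def by force
  define t' where "t' = ExpTerm (top_exp D1) (1 / sqnorm u) u"
  have t': "t' \<in> set E" "expo t' = top_exp E" "dir t' = u"
    using top by (simp_all add: t'_def E_def eigen_terms_def spectral_terms_def u_def)
  have "pair_exp D = top_exp D1 + max (cross_exp D1 u) (cross_exp D2 u)"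
    using pair_exp_eq_top_exp_add_cross_exp[OF D t(1,2)] t(3) top
    by (simp add: D_def cross_exp_append D1 D2 u)
  also have "\<dots> = pair_exp E"
    using pair_exp_eq_top_exp_add_cross_exp[OF E t'(1,2)] t'(3) top
    by (simp add: E_def cross_exp_append admissible_eigen_terms cross_exp_eigen_terms D1 D2 u)
  finally have low: "low_exp D = low_exp E" using top by (simp add: low_exp_def)
  have "proj (top_dir D) = proj (top_dir E)" if "low_exp D < top_exp D"
  proof -
    have "cross2 u (top_dir D) = 0" "cross2 u (top_dir E) = 0"
      using top_term_parallel[OF D that t(1,2)] top_term_parallel[OF E _ t'(1,2)] that low top t(3) t'(3)
      by simp_all
    thus ?thesis
      using proj_parallel[OF u top_dir_nonzero[OF D]] proj_parallel[OF u top_dir_nonzero[OF E]] by simp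
  qed
  thus ?thesis
    unfolding D_def[symmetric] E_def[symmetric] asymp_log_eq_shifted_proj[OF D] asymp_log_eq_shifted_proj[OF E]
    using low top low_exp_le_top_exp[OF D] by (cases "low_exp D < top_exp D") auto
qed

theorem asymp_log_append_eigen_terms:
  assumes "admissible D1" "admissible D2"
  shows "asymp_log (D1 @ D2) = asymp_log (eigen_terms D1 @ eigen_terms D2)"
proof (cases "top_exp D2 \<le> top_exp D1")
  case True
  thus ?thesis by (rule asymp_log_append_eigen_terms_ordered[OF assms])
next
  case False
  hence "asymp_log (D2 @ D1) = asymp_log (eigen_terms D2 @ eigen_terms D1)"
    by (intro asymp_log_append_eigen_terms_ordered assms) simp
  moreover have "asymp_log (D2 @ D1) = asymp_log (D1 @ D2)"
    and "asymp_log (eigen_terms D2 @ eigen_terms D1) = asymp_log (eigen_terms D1 @ eigen_terms D2)"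
    by (rule asymp_log_cong, auto)+
  ultimately show ?thesis by simp
qed

section \<open>The log-exp-supremum\<close>

lemma mexp_spectral_terms:
  assumes "u \<noteq> 0"
  shows "mexp (m *\<^sub>R (x *\<^sub>R proj u + y *\<^sub>R proj (perp u))) = expsum (spectral_terms u x y) m"
proof -
  have "m *\<^sub>R (x *\<^sub>R proj u + y *\<^sub>R proj (perp u)) = (m * x) *\<^sub>R proj u + (m * y) *\<^sub>R proj (perp u)"
    by (simp add: scaleR_add_right)
  hence "mexp (m *\<^sub>R (x *\<^sub>R proj u + y *\<^sub>R proj (perp u))) = exp (m * x) *\<^sub>R proj u + exp (m * y) *\<^sub>R proj (perp u)"
    by (simp only: mexp_spectral[OF assms])
  thus ?thesis by (simp add: expsum_def spectral_terms_def proj_def)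
qed

lemma mexp_asymp_log: "admissible D \<Longrightarrow> mexp (m *\<^sub>R asymp_log D) = expsum (eigen_terms D) m"
  unfolding asymp_log_def eigen_terms_def by (rule mexp_spectral_terms[OF top_dir_nonzero])

lemma mexp_symmetric_eq_expsum:
  assumes "transpose A = A"
  obtains D where "admissible D" "\<And>m. mexp (m *\<^sub>R A) = expsum D m"
proof -
  obtain u where u: "u \<noteq> 0" and A: "A = eig_max A *\<^sub>R proj u + eig_min A *\<^sub>R proj (perp u)"
    using spectral_decomposition[OF assms] by blast
  show ?thesis
  proof (rule that)
    show "admissible (spectral_terms u (eig_max A) (eig_min A))" by (rule admissible_spectral_terms[OF u])
    show "mexp (m *\<^sub>R A) = expsum (spectral_terms u (eig_max A) (eig_min A)) m" for m
      by (subst A) (rule mexp_spectral_terms[OF u])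
  qed
qed

lemma mexp_sum_eq_expsum:
  assumes "X \<noteq> {#}" "\<forall>A \<in># X. transpose A = A"
  obtains D where "admissible D" "\<And>m. (\<Sum>\<^sub># (image_mset (\<lambda>A. mexp (m *\<^sub>R A)) X)) = expsum D m"
  using assms
proof (induction X arbitrary: thesis)
  case empty
  thus ?case by simp
next
  case (add A X)
  have X: "\<forall>A \<in># X. transpose A = A" using add.prems(3) by simp
  obtain D where D: "admissible D" "\<And>m. mexp (m *\<^sub>R A) = expsum D m"
    using mexp_symmetric_eq_expsum add.prems(3) by (metis union_single_eq_member)
  show ?case
  proof (cases "X = {#}")
    case True
    show ?thesis by (rule add.prems(1)[OF D(1)]) (simp add: True D(2))
  next
    case False
    obtain D' where D': "admissible D'" "\<And>m. (\<Sum>\<^sub># (image_mset (\<lambda>A. mexp (m *\<^sub>R A)) X)) = expsum D' m"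
      using add.IH[OF _ False X] by blast
    show ?thesis
      by (rule add.prems(1)[of "D @ D'"]) (simp_all add: admissible_append D D' expsum_append)
  qed
qed

lemma SupLE_eq_asymp_log:
  assumes "admissible D" "\<And>m. (\<Sum>\<^sub># (image_mset (\<lambda>A. mexp (m *\<^sub>R A)) X)) = expsum D m"
  shows "SupLE X = asymp_log D"
  unfolding SupLE_def assms(2) by (rule tendsto_Lim[OF trivial_limit_at_top_linorder expsum_log_tendsto[OF assms(1)]])

theorem proposition1:
  fixes X Y :: "(real^2^2) multiset"
  assumes "X \<noteq> {#}" and "Y \<noteq> {#}"
    and "\<forall>A \<in># X. transpose A = A"
    and "\<forall>A \<in># Y. transpose A = A"
  shows "SupLE (X + Y) = SupLE {# SupLE X, SupLE Y #}"
proof -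
  obtain D1 where D1: "admissible D1" "\<And>m. (\<Sum>\<^sub># (image_mset (\<lambda>A. mexp (m *\<^sub>R A)) X)) = expsum D1 m"
    using mexp_sum_eq_expsum[OF assms(1,3)] by blast
  obtain D2 where D2: "admissible D2" "\<And>m. (\<Sum>\<^sub># (image_mset (\<lambda>A. mexp (m *\<^sub>R A)) Y)) = expsum D2 m"
    using mexp_sum_eq_expsum[OF assms(2,4)] by blast
  have "SupLE (X + Y) = asymp_log (D1 @ D2)"
    using D1 D2 by (intro SupLE_eq_asymp_log admissible_append) (simp_all add: expsum_append)
  also have "\<dots> = asymp_log (eigen_terms D1 @ eigen_terms D2)"
    by (rule asymp_log_append_eigen_terms[OF D1(1) D2(1)])
  also have "\<dots> = SupLE {# asymp_log D1, asymp_log D2 #}"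
    using D1(1) D2(1)
    by (intro SupLE_eq_asymp_log[symmetric] admissible_append admissible_eigen_terms)
       (simp_all add: mexp_asymp_log expsum_append)
  also have "\<dots> = SupLE {# SupLE X, SupLE Y #}"
    using SupLE_eq_asymp_log D1 D2 by simp
  finally show ?thesis .
qed

end
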